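(* Let $p$ be an odd prime and $m\in\mathbb Z_p$ with $m\not\equiv0\pmod p$. Then $$\sum_{k=0}^{p-1}\frac{\binom{2k}k^3}{(16m)^k(2k-1)^2}\equiv\Big(4-\frac{16}m\Big)\sum_{k=0}^{(p-1)/2}\frac{k\binom{2k}k^3}{(16m)^k}+\Big(1+\frac4m\Big)\sum_{k=0}^{(p-1)/2}\frac{\binom{2k}k^3}{(16m)^k}-\frac6m\sum_{k=0}^{(p-1)/2}\frac{\binom{2k}k^3}{(16m)^k(k+1)}\pmod{p^3}.$$
   Context: $\mathbb Z_p$ denotes the set of rational numbers whose denominator is not divisible by $p$; for $u,v\in\mathbb Z_p$, $u\equiv v\pmod{p^r}$ means $(u-v)/p^r\in\mathbb Z_p$. *)

theory Defs
  imports Complex_Main "HOL-Computational_Algebra.Primes"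
begin

text \<open>The ring Z_p of rationals whose (reduced) denominator is not divisible by p.\<close>
definition in_Zp :: "nat \<Rightarrow> rat \<Rightarrow> bool" where
  "in_Zp p x \<longleftrightarrow> \<not> (int p dvd snd (quotient_of x))"

definition cong_Zp :: "rat \<Rightarrow> rat \<Rightarrow> nat \<Rightarrow> nat \<Rightarrow> bool" where
  "cong_Zp u v p r \<longleftrightarrow> in_Zp p ((u - v) / of_nat p ^ r)"

end

theory Submission
  imports Defs
begin

text \<open>
  Let t(k) = binom(2k,k)^3 / (16m)^k and let r(k) be the summand of the right-hand side
  (combined_term below). The ratio t(k+1)/t(k) = (2k+1)^3 / (2m(k+1)^3) yields the
  Gosper-type identity (4k+1) t(k) + t(k+1)/(2k+1)^2 = r(k) + (4k+5) t(k+1), which telescopes to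
  sum_{k<=N} t(k)/(2k-1)^2 = sum_{k<N} r(k) + (4N+1) t(N).
  Take N = p - 1 = 2n. For n < k < p the prime p divides binom(2k,k), so p^3 divides t(k), and
  for k < p - 1 the denominator k + 1 of r(k) is a p-adic unit. Hence the terms r(k) with
  n < k < 2n and the boundary term (8n+1) t(2n) all vanish modulo p^3.
\<close>

lemma in_Zp_iff_fraction:
  "in_Zp p x \<longleftrightarrow> (\<exists>a b. \<not> int p dvd b \<and> x = of_int a / of_int b)"
proof
  assume "in_Zp p x"
  obtain a b where q: "quotient_of x = (a, b)" by (cases "quotient_of x")
  with \<open>in_Zp p x\<close> show "\<exists>a b. \<not> int p dvd b \<and> x = of_int a / of_int b"
    using quotient_of_div[OF q] by (auto simp: in_Zp_def)
next
  assume "\<exists>a b. \<not> int p dvd b \<and> x = of_int a / of_int b"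
  then obtain a b where b: "\<not> int p dvd b" and x: "x = of_int a / of_int b" by blast
  obtain a' b' where q: "quotient_of x = (a', b')" by (cases "quotient_of x")
  have "b \<noteq> 0" "b' > 0" using b quotient_of_denom_pos[OF q] by auto
  have "of_int a / of_int b = (of_int a' / of_int b' :: rat)"
    using quotient_of_div[OF q] x by simp
  then have "a * b' = a' * b"
    using \<open>b \<noteq> 0\<close> \<open>b' > 0\<close> by (simp add: field_simps flip: of_int_mult)
  then have "b' dvd b"
    using quotient_of_coprime[OF q]
    by (metis coprime_commute coprime_dvd_mult_right_iff dvd_triv_right)
  with b q show "in_Zp p x" by (auto simp: in_Zp_def dvd_trans)
qed

lemma in_Zp_of_nat: "prime p \<Longrightarrow> in_Zp p (of_nat a)"
  by (simp add: in_Zp_def prime_nat_iff)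

lemma in_Zp_numeral: "prime p \<Longrightarrow> in_Zp p (numeral a)"
  using in_Zp_of_nat[of p "numeral a"] by simp

lemma in_Zp_1: "prime p \<Longrightarrow> in_Zp p 1"
  using in_Zp_of_nat[of p 1] by simp

lemma in_Zp_one_over_nat: "\<not> p dvd a \<Longrightarrow> in_Zp p (1 / of_nat a)"
  unfolding in_Zp_iff_fraction by (intro exI[of _ 1] exI[of _ "int a"]) simp

lemma in_Zp_add:
  assumes "prime p" "in_Zp p x" "in_Zp p y"
  shows "in_Zp p (x + y)"
proof -
  obtain a b c d where "\<not> int p dvd b" "\<not> int p dvd d"
    and "x = of_int a / of_int b" "y = of_int c / of_int d"
    using assms(2,3) by (auto simp: in_Zp_iff_fraction)
  moreover from this have "b \<noteq> 0" "d \<noteq> 0" by auto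
  ultimately have "\<not> int p dvd b * d" "x + y = of_int (a * d + c * b) / of_int (b * d)"
    using \<open>prime p\<close> by (auto simp: prime_dvd_mult_iff field_simps)
  then show ?thesis unfolding in_Zp_iff_fraction by blast
qed

lemma in_Zp_mult:
  assumes "prime p" "in_Zp p x" "in_Zp p y"
  shows "in_Zp p (x * y)"
proof -
  obtain a b c d where "\<not> int p dvd b" "\<not> int p dvd d"
    and "x = of_int a / of_int b" "y = of_int c / of_int d"
    using assms(2,3) by (auto simp: in_Zp_iff_fraction)
  then have "\<not> int p dvd b * d" "x * y = of_int (a * c) / of_int (b * d)"
    using \<open>prime p\<close> by (auto simp: prime_dvd_mult_iff)
  then show ?thesis unfolding in_Zp_iff_fraction by blast
qed

lemma in_Zp_uminus:
  assumes "in_Zp p x"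
  shows "in_Zp p (- x)"
proof -
  obtain a b where "\<not> int p dvd b" "x = of_int a / of_int b"
    using assms by (auto simp: in_Zp_iff_fraction)
  then show ?thesis unfolding in_Zp_iff_fraction by (intro exI[of _ "- a"] exI[of _ b]) simp
qed

lemma in_Zp_diff: "prime p \<Longrightarrow> in_Zp p x \<Longrightarrow> in_Zp p y \<Longrightarrow> in_Zp p (x - y)"
  using in_Zp_add[of p x "- y"] in_Zp_uminus[of p y] by simp

lemma in_Zp_power: "prime p \<Longrightarrow> in_Zp p x \<Longrightarrow> in_Zp p (x ^ n)"
  by (induction n) (simp_all add: in_Zp_mult in_Zp_1)

lemma in_Zp_sum: "prime p \<Longrightarrow> (\<And>k. k \<in> A \<Longrightarrow> in_Zp p (f k)) \<Longrightarrow> in_Zp p (sum f A)"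
  by (induction A rule: infinite_finite_induct)
    (simp_all add: in_Zp_add in_Zp_of_nat[of p 0, simplified])

lemma in_Zp_one_over_if_not_cong_0:
  assumes "prime p" "in_Zp p m" "\<not> cong_Zp m 0 p 1"
  shows "in_Zp p (1 / m)"
proof -
  obtain a b where b: "\<not> int p dvd b" and m: "m = of_int a / of_int b"
    using assms(2) by (auto simp: in_Zp_iff_fraction)
  have "\<not> int p dvd a"
  proof
    assume "int p dvd a"
    then obtain c where "a = int p * c" by blast
    then have "m / of_nat p = of_int c / of_int b" using m \<open>prime p\<close> by (simp add: field_simps)
    with b assms(3) show False by (auto simp: cong_Zp_def in_Zp_iff_fraction)
  qed
  moreover have "1 / m = of_int b / of_int a" using m by simp
  ultimately show ?thesis by (auto simp: in_Zp_iff_fraction)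
qed

lemma sum_lessThan_split_at:
  fixes f :: "nat \<Rightarrow> 'a :: comm_monoid_add"
  assumes "n < N"
  shows "(\<Sum>k<N. f k) = (\<Sum>k\<le>n. f k) + (\<Sum>k\<in>{n<..<N}. f k)"
proof -
  have "{..<N} = {..n} \<union> {n<..<N}" using assms by auto
  moreover have "{..n} \<inter> {n<..<N} = {}" by auto
  ultimately show ?thesis by (simp add: sum.union_disjoint)
qed

lemma Suc_times_central_binomial_Suc:
  "Suc k * ((2 * Suc k) choose Suc k) = 2 * (2 * k + 1) * ((2 * k) choose k)"
proof -
  have sym: "Suc (2 * k) choose k = Suc (2 * k) choose Suc k"
    using binomial_symmetric[of k "Suc (2 * k)"] by simp
  have "Suc k * (Suc k * ((2 * Suc k) choose Suc k))
      = Suc k * (Suc (Suc (2 * k)) * (Suc (2 * k) choose Suc k))"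
    using Suc_times_binomial[of k "Suc (2 * k)"] by (simp del: binomial_Suc_Suc add: sym)
  also have "\<dots> = Suc k * (2 * ((Suc (2 * k) choose Suc k) * Suc k))"
    by (simp del: binomial_Suc_Suc)
  also have "\<dots> = Suc k * (2 * (2 * k + 1) * ((2 * k) choose k))"
    by (simp only: Suc_times_binomial_eq[symmetric]) (simp only: Suc_eq_plus1 mult.assoc)
  finally show ?thesis by (metis mult_left_cancel Suc_neq_Zero)
qed

lemma prime_dvd_central_binomial:
  assumes "prime p" "k < p" "p \<le> 2 * k"
  shows "p dvd (2 * k) choose k"
proof -
  have "fact k * fact k * ((2 * k) choose k) = (fact (2 * k) :: nat)"
    using binomial_fact_lemma[of k "2 * k"] by simp
  moreover have "p dvd fact (2 * k)" "\<not> p dvd fact k"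
    using assms by (simp_all add: prime_dvd_fact_iff)
  ultimately show ?thesis
    using \<open>prime p\<close> by (metis prime_dvd_mult_iff)
qed

definition central_cube_term :: "rat \<Rightarrow> nat \<Rightarrow> rat" where
  "central_cube_term m k = of_nat ((2 * k) choose k) ^ 3 / (16 * m) ^ k"

definition combined_term :: "rat \<Rightarrow> nat \<Rightarrow> rat" where
  "combined_term m k = (4 - 16 / m) * (of_nat k * central_cube_term m k)
     + (1 + 4 / m) * central_cube_term m k - 6 / m * (central_cube_term m k / (of_nat k + 1))"

lemma central_cube_term_Suc:
  "central_cube_term m (Suc k)
     = central_cube_term m k * (2 * of_nat k + 1) ^ 3 / (2 * m * (of_nat k + 1) ^ 3)"
proof -
  have "(of_nat k + 1 :: rat) * of_nat ((2 * Suc k) choose Suc k)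
      = 2 * (2 * of_nat k + 1) * of_nat ((2 * k) choose k)"
    using arg_cong[OF Suc_times_central_binomial_Suc[of k], of rat_of_nat]
    by (simp del: binomial_Suc_Suc add: algebra_simps)
  then have C_Suc: "of_nat ((2 * Suc k) choose Suc k)
      = 2 * (2 * of_nat k + 1) * of_nat ((2 * k) choose k) / (of_nat k + 1 :: rat)"
    by (simp del: binomial_Suc_Suc add: field_simps)
  show ?thesis
    unfolding central_cube_term_def C_Suc
    by (simp add: power_mult_distrib power_divide divide_simps)
      (simp add: power3_eq_cube algebra_simps)
qed

lemma combined_term_step:
  assumes "m \<noteq> 0"
  shows "(4 * of_nat k + 1) * central_cube_term m k
           + central_cube_term m (Suc k) / (2 * of_nat k + 1) ^ 2
         = combined_term m k + (4 * of_nat k + 5) * central_cube_term m (Suc k)"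
proof -
  have "(of_nat k + 1 :: rat) \<noteq> 0" "(2 * of_nat k + 1 :: rat) \<noteq> 0"
    by (simp_all add: add_pos_nonneg add.commute[of _ 1])
  with assms show ?thesis
    unfolding combined_term_def central_cube_term_Suc by (simp add: divide_simps) algebra
qed

lemma sum_central_cube_term_over_odd_squares:
  assumes "m \<noteq> 0"
  shows "(\<Sum>k\<le>N. central_cube_term m k / (2 * of_nat k - 1) ^ 2)
           = (\<Sum>k<N. combined_term m k) + (4 * of_nat N + 1) * central_cube_term m N"
proof (induction N)
  case 0
  then show ?case by (simp add: central_cube_term_def)
next
  case (Suc N)
  have "2 * of_nat (Suc N) - 1 = (2 * of_nat N + 1 :: rat)"
    and "4 * of_nat (Suc N) + 1 = (4 * of_nat N + 5 :: rat)" by simp_all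
  with Suc.IH combined_term_step[OF assms, of N] show ?case
    by (simp only: sum.atMost_Suc sum.lessThan_Suc)
qed

lemma odd_prime_not_dvd_power_2:
  fixes p :: nat
  assumes "prime p" "odd p"
  shows "\<not> p dvd 2 ^ n"
proof
  assume "p dvd 2 ^ n"
  then have "p dvd 2" using \<open>prime p\<close> prime_dvd_power by blast
  then have "p = 2" using \<open>prime p\<close> by (simp add: primes_dvd_imp_eq)
  with \<open>odd p\<close> show False by simp
qed

lemma in_Zp_central_cube_term_div_cube:
  assumes "prime p" "odd p" "in_Zp p (1 / m)" "k < p" "p \<le> 2 * k"
  shows "in_Zp p (central_cube_term m k / of_nat p ^ 3)"
proof -
  obtain c where c: "(2 * k) choose k = p * c"
    using prime_dvd_central_binomial[OF assms(1,4,5)] by blast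
  have "in_Zp p (1 / 16)"
    using in_Zp_one_over_nat[OF odd_prime_not_dvd_power_2[OF assms(1,2), of 4]] by simp
  with assms(1,3) have "in_Zp p (of_nat c ^ 3 * (1 / 16 * (1 / m)) ^ k)"
    by (intro in_Zp_mult in_Zp_power in_Zp_of_nat)
  moreover have "central_cube_term m k / of_nat p ^ 3 = of_nat c ^ 3 * (1 / 16 * (1 / m)) ^ k"
    using c prime_gt_0_nat[OF assms(1)]
    by (simp add: central_cube_term_def power_mult_distrib power_one_over)
  ultimately show ?thesis by simp
qed

lemma in_Zp_combined_term_div_cube:
  assumes "prime p" "odd p" "in_Zp p (1 / m)" "k + 1 < p" "p \<le> 2 * k"
  shows "in_Zp p (combined_term m k / of_nat p ^ 3)"
proof -
  define u where "u = central_cube_term m k / of_nat p ^ 3"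
  have "in_Zp p u"
    unfolding u_def using assms by (intro in_Zp_central_cube_term_div_cube) simp_all
  moreover have "\<not> p dvd k + 1"
    using assms(4) by (auto dest: dvd_imp_le)
  then have "in_Zp p (1 / (of_nat k + 1))"
    using in_Zp_one_over_nat[of p "k + 1"] by (simp add: add.commute)
  ultimately have "in_Zp p (((4 - 16 * (1 / m)) * of_nat k + (1 + 4 * (1 / m))
      - 6 * (1 / m) * (1 / (of_nat k + 1))) * u)"
    using assms(1,3)
    by (intro in_Zp_add in_Zp_diff in_Zp_mult in_Zp_1 in_Zp_numeral in_Zp_of_nat)
  moreover have "combined_term m k / of_nat p ^ 3
      = ((4 - 16 * (1 / m)) * of_nat k + (1 + 4 * (1 / m))
          - 6 * (1 / m) * (1 / (of_nat k + 1))) * u"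
    unfolding combined_term_def u_def by (simp add: field_simps)
  ultimately show ?thesis by simp
qed

lemma cong_sum_central_cube_term_over_odd_squares:
  assumes "prime p" "p = 2 * n + 1" "m \<noteq> 0" "in_Zp p (1 / m)"
  shows "cong_Zp (\<Sum>k\<le>2 * n. central_cube_term m k / (2 * of_nat k - 1) ^ 2)
           (\<Sum>k\<le>n. combined_term m k) p 3"
proof -
  have "odd p" "n \<ge> 1" using assms(1,2) prime_ge_2_nat[OF assms(1)] by simp_all
  have "(\<Sum>k<2 * n. combined_term m k)
      = (\<Sum>k\<le>n. combined_term m k) + (\<Sum>k\<in>{n<..<2 * n}. combined_term m k)"
    using \<open>n \<ge> 1\<close> by (intro sum_lessThan_split_at) simp
  then have "(\<Sum>k\<le>2 * n. central_cube_term m k / (2 * of_nat k - 1) ^ 2)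
      - (\<Sum>k\<le>n. combined_term m k)
      = (\<Sum>k\<in>{n<..<2 * n}. combined_term m k)
        + of_nat (8 * n + 1) * central_cube_term m (2 * n)"
    using sum_central_cube_term_over_odd_squares[OF \<open>m \<noteq> 0\<close>, of "2 * n"] by simp
  then have "((\<Sum>k\<le>2 * n. central_cube_term m k / (2 * of_nat k - 1) ^ 2)
      - (\<Sum>k\<le>n. combined_term m k)) / of_nat p ^ 3
      = (\<Sum>k\<in>{n<..<2 * n}. combined_term m k / of_nat p ^ 3)
        + of_nat (8 * n + 1) * (central_cube_term m (2 * n) / of_nat p ^ 3)"
    by (simp add: add_divide_distrib sum_divide_distrib)
  moreover have "in_Zp p (\<Sum>k\<in>{n<..<2 * n}. combined_term m k / of_nat p ^ 3)"
    using assms \<open>odd p\<close> by (intro in_Zp_sum in_Zp_combined_term_div_cube) auto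
  moreover have "in_Zp p (of_nat (8 * n + 1) * (central_cube_term m (2 * n) / of_nat p ^ 3))"
    using assms \<open>odd p\<close> \<open>n \<ge> 1\<close>
    by (intro in_Zp_mult in_Zp_of_nat in_Zp_central_cube_term_div_cube) auto
  ultimately show ?thesis
    unfolding cong_Zp_def using assms(1) by (simp add: in_Zp_add)
qed

theorem theorem5p2:
  fixes p :: nat and m :: rat
  assumes "prime p" and "odd p"
    and "in_Zp p m" and "\<not> cong_Zp m 0 p 1"
  shows "cong_Zp
    (\<Sum>k = 0..p - 1. of_nat ((2*k) choose k) ^ 3 / ((16*m) ^ k * (2 * of_nat k - 1) ^ 2))
    ((4 - 16 / m) * (\<Sum>k = 0..(p - 1) div 2. of_nat k * of_nat ((2*k) choose k) ^ 3 / (16*m) ^ k)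
     + (1 + 4 / m) * (\<Sum>k = 0..(p - 1) div 2. of_nat ((2*k) choose k) ^ 3 / (16*m) ^ k)
     - 6 / m * (\<Sum>k = 0..(p - 1) div 2. of_nat ((2*k) choose k) ^ 3 / ((16*m) ^ k * (of_nat k + 1))))
    p 3"
proof -
  obtain n where p: "p = 2 * n + 1" using \<open>odd p\<close> oddE by blast
  have "m \<noteq> 0" using assms(4) in_Zp_of_nat[OF \<open>prime p\<close>, of 0] by (auto simp: cong_Zp_def)
  have inv_m: "in_Zp p (1 / m)" using assms in_Zp_one_over_if_not_cong_0 by blast
  have "(\<Sum>k = 0..p - 1. of_nat ((2*k) choose k) ^ 3 / ((16*m) ^ k * (2 * of_nat k - 1) ^ 2))
      = (\<Sum>k\<le>2 * n. central_cube_term m k / (2 * of_nat k - 1) ^ 2)"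
    by (simp add: p atLeast0AtMost central_cube_term_def)
  moreover have "(4 - 16 / m) * (\<Sum>k = 0..(p - 1) div 2. of_nat k * of_nat ((2*k) choose k) ^ 3 / (16*m) ^ k)
     + (1 + 4 / m) * (\<Sum>k = 0..(p - 1) div 2. of_nat ((2*k) choose k) ^ 3 / (16*m) ^ k)
     - 6 / m * (\<Sum>k = 0..(p - 1) div 2. of_nat ((2*k) choose k) ^ 3 / ((16*m) ^ k * (of_nat k + 1)))
      = (\<Sum>k\<le>n. combined_term m k)"
    by (simp add: p atLeast0AtMost combined_term_def central_cube_term_def
        sum_distrib_left sum.distrib sum_subtractf)
  ultimately show ?thesis
    using cong_sum_central_cube_term_over_odd_squares[OF \<open>prime p\<close> p \<open>m \<noteq> 0\<close> inv_m]
    by simp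
qed

end
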